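(* Let $V$ be a Majorana representation with identity $\mathbb 1$ satisfying axiom M2'. Let $x\in V$ be an idempotent. Then the eigenspaces $V_0^{(x)}$ and $V_1^{(x)}$ of $\mathrm{ad}_x$ are subalgebras of $V$.
   Context: A transposition group $(G,T)$ is a finite group $G$ with a $G$-stable set $T$ of involutions generating $G$. A Majorana representation of $(G,T)$ is a quintuple $(G,T,V,\varphi,\psi)$ where $V$ is a commutative non-associative real algebra with a (positive definite) inner product $(\,,)$, $\varphi:G\to GL(V)$ is a representation with $\varphi(G)\le \mathrm{Aut}(V)$, and $\psi:T\to V\setminus\{0\}$ is injective with $\psi(t^g)=\psi(t)^{\varphi(g)}$, such that: (M1) $(u,v\cdot w)=(u\cdot v,w)$ for all $u,v,w$; (M2) $(u\cdot u,v\cdot v)\ge (u\cdot v,u\cdot v)$ for all $u,v$ (Norton inequality); (M3) elements of $\psi(T)$ (Majorana axes) are idempotents of length $1$; (M4) each Majorana axis $a$ has $\mathrm{ad}_a:u\mapsto a\cdot u$ diagonalizable with eigenvalues in $\{0,1,\frac1{4},\frac1{32}\}$; (M5) $1$ is a simple eigenvalue of each Majorana axis; (M6) for each axis $a$ the linear map $\tau(a)$ acting as $(-1)^{32\mu}$ on the $\mu$-eigenspace of $\mathrm{ad}_a$ is an algebra automorphism; (M7) for each axis $a$ the map $\sigma(a)$ on the fixed space $C_V(\tau(a))$ acting as $(-1)^{4\mu}$ on the $\mu$-eigenspaces, $\mu\ne\frac1{32}$, preserves the product of $C_V(\tau(a))$; (M8) $\tau(\psi(t))=\varphi(t)$ for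 all $t\in T$. Axiom M2': the Norton inequality holds for all $u,v$, with equality precisely when $\mathrm{ad}_u$ and $\mathrm{ad}_v$ commute. $V_\mu^{(x)}$ denotes the $\mu$-eigenspace of $\mathrm{ad}_x$. *)

theory Defs
  imports "HOL-Analysis.Analysis" "HOL-Algebra.Generated_Groups"
begin

definition transposition_group :: "('g, 'b) monoid_scheme \<Rightarrow> 'g set \<Rightarrow> bool" where
  "transposition_group G T \<longleftrightarrow>
     group G \<and> finite (carrier G) \<and> T \<subseteq> carrier G \<and>
     (\<forall>t\<in>T. t \<noteq> \<one>\<^bsub>G\<^esub> \<and> t \<otimes>\<^bsub>G\<^esub> t = \<one>\<^bsub>G\<^esub>) \<and>
     (\<forall>t\<in>T. \<forall>g\<in>carrier G. inv\<^bsub>G\<^esub> g \<otimes>\<^bsub>G\<^esub> t \<otimes>\<^bsub>G\<^esub> g \<in> T) \<and>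
     generate G T = carrier G"

definition comm_real_algebra :: "('v::real_inner \<Rightarrow> 'v \<Rightarrow> 'v) \<Rightarrow> bool" where
  "comm_real_algebra m \<longleftrightarrow> bilinear m \<and> (\<forall>u v. m u v = m v u)"

definition eigsp :: "('v::real_inner \<Rightarrow> 'v \<Rightarrow> 'v) \<Rightarrow> 'v \<Rightarrow> real \<Rightarrow> 'v set" where
  "eigsp m x \<mu> = {u. m x u = \<mu> *\<^sub>R u}"

definition algebra_automorphism :: "('v::real_inner \<Rightarrow> 'v \<Rightarrow> 'v) \<Rightarrow> ('v \<Rightarrow> 'v) \<Rightarrow> bool" where
  "algebra_automorphism m f \<longleftrightarrow> linear f \<and> bij f \<and> (\<forall>u v. f (m u v) = m (f u) (f v))"

(* tau(a): acts as (-1)^(32 mu) on V_mu^(a), mu \<in> {0,1,1/4,1/32} (V is the direct sum of these) *)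
definition is_tau :: "('v::real_inner \<Rightarrow> 'v \<Rightarrow> 'v) \<Rightarrow> 'v \<Rightarrow> ('v \<Rightarrow> 'v) \<Rightarrow> bool" where
  "is_tau m a f \<longleftrightarrow>
     (\<forall>u0\<in>eigsp m a 0. \<forall>u1\<in>eigsp m a 1. \<forall>u4\<in>eigsp m a (1/4). \<forall>u32\<in>eigsp m a (1/32).
        f (u0 + u1 + u4 + u32) = u0 + u1 + u4 - u32)"

definition tau_fixed :: "('v::real_inner \<Rightarrow> 'v \<Rightarrow> 'v) \<Rightarrow> 'v \<Rightarrow> 'v set" where
  "tau_fixed m a = {u0 + u1 + u4 | u0 u1 u4.
      u0 \<in> eigsp m a 0 \<and> u1 \<in> eigsp m a 1 \<and> u4 \<in> eigsp m a (1/4)}"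

(* sigma(a) on C_V(tau(a)): acts as (-1)^(4 mu) on V_mu^(a), mu \<in> {0,1,1/4} *)
definition is_sigma :: "('v::real_inner \<Rightarrow> 'v \<Rightarrow> 'v) \<Rightarrow> 'v \<Rightarrow> ('v \<Rightarrow> 'v) \<Rightarrow> bool" where
  "is_sigma m a s \<longleftrightarrow>
     (\<forall>u0\<in>eigsp m a 0. \<forall>u1\<in>eigsp m a 1. \<forall>u4\<in>eigsp m a (1/4).
        s (u0 + u1 + u4) = u0 + u1 - u4)"

definition majorana_representation ::
  "('g, 'b) monoid_scheme \<Rightarrow> 'g set \<Rightarrow> ('v::real_inner \<Rightarrow> 'v \<Rightarrow> 'v) \<Rightarrow>
   ('g \<Rightarrow> 'v \<Rightarrow> 'v) \<Rightarrow> ('g \<Rightarrow> 'v) \<Rightarrow> bool" where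
  "majorana_representation G T m \<phi> \<psi> \<longleftrightarrow>
     transposition_group G T \<and>
     comm_real_algebra m \<and>
     \<comment> \<open>phi : G \<rightarrow> GL(V) a representation (right action: v^(phi(gh)) = (v^(phi g))^(phi h)),
        with phi(G) \<le> Aut(V)\<close>
     (\<forall>g\<in>carrier G. algebra_automorphism m (\<phi> g)) \<and>
     (\<forall>g\<in>carrier G. \<forall>h\<in>carrier G. \<phi> (g \<otimes>\<^bsub>G\<^esub> h) = \<phi> h \<circ> \<phi> g) \<and>
     \<comment> \<open>psi : T \<rightarrow> V - {0} injective and equivariant\<close>
     inj_on \<psi> T \<and> (\<forall>t\<in>T. \<psi> t \<noteq> 0) \<and>
     (\<forall>t\<in>T. \<forall>g\<in>carrier G. \<psi> (inv\<^bsub>G\<^esub> g \<otimes>\<^bsub>G\<^esub> t \<otimes>\<^bsub>G\<^esub> g) = \<phi> g (\<psi> t)) \<and>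
     \<comment> \<open>M1\<close>
     (\<forall>u v w. inner u (m v w) = inner (m u v) w) \<and>
     \<comment> \<open>M2 (Norton inequality)\<close>
     (\<forall>u v. inner (m u u) (m v v) \<ge> inner (m u v) (m u v)) \<and>
     \<comment> \<open>M3\<close>
     (\<forall>t\<in>T. m (\<psi> t) (\<psi> t) = \<psi> t \<and> inner (\<psi> t) (\<psi> t) = 1) \<and>
     \<comment> \<open>M4: ad_a diagonalizable with eigenvalues in {0,1,1/4,1/32}\<close>
     (\<forall>t\<in>T. \<forall>u. \<exists>u0\<in>eigsp m (\<psi> t) 0. \<exists>u1\<in>eigsp m (\<psi> t) 1.
        \<exists>u4\<in>eigsp m (\<psi> t) (1/4). \<exists>u32\<in>eigsp m (\<psi> t) (1/32). u = u0 + u1 + u4 + u32) \<and>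
     \<comment> \<open>M5: 1 is a simple eigenvalue\<close>
     (\<forall>t\<in>T. eigsp m (\<psi> t) 1 = range (\<lambda>c. c *\<^sub>R \<psi> t)) \<and>
     \<comment> \<open>M6\<close>
     (\<forall>t\<in>T. \<exists>f. is_tau m (\<psi> t) f \<and> algebra_automorphism m f) \<and>
     \<comment> \<open>M7\<close>
     (\<forall>t\<in>T. \<exists>s. is_sigma m (\<psi> t) s \<and>
        (\<forall>u\<in>tau_fixed m (\<psi> t). \<forall>v\<in>tau_fixed m (\<psi> t). s (m u v) = m (s u) (s v))) \<and>
     \<comment> \<open>M8\<close>
     (\<forall>t\<in>T. is_tau m (\<psi> t) (\<phi> t))"

definition axiom_M2' :: "('v::real_inner \<Rightarrow> 'v \<Rightarrow> 'v) \<Rightarrow> bool" where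
  "axiom_M2' m \<longleftrightarrow>
     (\<forall>u v. inner (m u u) (m v v) \<ge> inner (m u v) (m u v) \<and>
        (inner (m u u) (m v v) = inner (m u v) (m u v) \<longleftrightarrow>
           m u \<circ> m v = m v \<circ> m u))"

definition subalgebra :: "('v::real_inner \<Rightarrow> 'v \<Rightarrow> 'v) \<Rightarrow> 'v set \<Rightarrow> bool" where
  "subalgebra m W \<longleftrightarrow> subspace W \<and> (\<forall>u\<in>W. \<forall>v\<in>W. m u v \<in> W)"

end

theory Submission
  imports Defs
begin

text \<open>For an idempotent \<open>x\<close> and \<open>u \<in> V\<^sub>\<mu>\<^sup>(\<^sup>x\<^sup>)\<close> with \<open>\<mu>\<^sup>2 = \<mu>\<close>, associativity of the form gives
  \<open>(x\<cdot>x, u\<cdot>u) = (x\<cdot>u, u) = \<mu>(u,u) = \<mu>\<^sup>2(u,u) = (x\<cdot>u, x\<cdot>u)\<close>, so the Norton inequality is an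
  equality and M2' makes \<open>ad\<^sub>x\<close> and \<open>ad\<^sub>u\<close> commute. Then \<open>x\<cdot>(u\<cdot>v) = u\<cdot>(x\<cdot>v) = \<mu> u\<cdot>v\<close>
  for every \<open>v \<in> V\<^sub>\<mu>\<^sup>(\<^sup>x\<^sup>)\<close>.\<close>

lemma subspace_eigsp:
  assumes "linear (m x)"
  shows "subspace (eigsp m x \<mu>)"
  unfolding subspace_def eigsp_def
  using linear_0[OF assms] linear_add[OF assms] linear_scale[OF assms]
  by (auto simp: algebra_simps)

lemma norton_equality_eigenvector_of_idempotent:
  assumes assoc: "\<forall>u v w. inner u (m v w) = inner (m u v) w"
    and idem: "m x x = x"
    and u: "u \<in> eigsp m x \<mu>" and \<mu>: "\<mu> * \<mu> = \<mu>"
  shows "inner (m x x) (m u u) = inner (m x u) (m x u)"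
proof -
  have xu: "m x u = \<mu> *\<^sub>R u" using u by (simp add: eigsp_def)
  have "inner (m x x) (m u u) = inner (m x u) u" using assoc idem by metis
  also have "\<dots> = (\<mu> * \<mu>) * inner u u" by (simp add: xu \<mu>)
  also have "\<dots> = inner (m x u) (m x u)" by (simp add: xu)
  finally show ?thesis .
qed

lemma eigsp_mult_closed:
  assumes assoc: "\<forall>u v w. inner u (m v w) = inner (m u v) w"
    and M2': "axiom_M2' m" and idem: "m x x = x" and \<mu>: "\<mu> * \<mu> = \<mu>"
    and lin: "linear (m u)"
    and u: "u \<in> eigsp m x \<mu>" and v: "v \<in> eigsp m x \<mu>"
  shows "m u v \<in> eigsp m x \<mu>"
proof -
  have "inner (m x x) (m u u) = inner (m x u) (m x u)"
    using norton_equality_eigenvector_of_idempotent[OF assoc idem u \<mu>] .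
  then have "m x \<circ> m u = m u \<circ> m x" using M2' unfolding axiom_M2'_def by blast
  then have "m x (m u v) = m u (m x v)" by (metis comp_apply)
  also have "\<dots> = m u (\<mu> *\<^sub>R v)" using v by (simp add: eigsp_def)
  also have "\<dots> = \<mu> *\<^sub>R m u v" using linear_scale[OF lin] .
  finally show ?thesis by (simp add: eigsp_def)
qed

lemma subalgebra_eigsp_idempotent:
  assumes alg: "comm_real_algebra m"
    and assoc: "\<forall>u v w. inner u (m v w) = inner (m u v) w"
    and M2': "axiom_M2' m" and idem: "m x x = x" and \<mu>: "\<mu> * \<mu> = \<mu>"
  shows "subalgebra m (eigsp m x \<mu>)"
proof -
  have lin: "\<And>u. linear (m u)"
    using alg unfolding comm_real_algebra_def bilinear_def by blast
  show ?thesis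
    unfolding subalgebra_def
    using subspace_eigsp[of m x \<mu>, OF lin] eigsp_mult_closed[OF assoc M2' idem \<mu> lin] by blast
qed

theorem mainTheorem2:
  fixes G :: "('g, 'b) monoid_scheme" and T :: "'g set"
    and m :: "'v::real_inner \<Rightarrow> 'v \<Rightarrow> 'v"
    and \<phi> :: "'g \<Rightarrow> 'v \<Rightarrow> 'v" and \<psi> :: "'g \<Rightarrow> 'v"
    and one :: 'v and x :: 'v
  assumes "majorana_representation G T m \<phi> \<psi>"
    and "\<forall>v. m one v = v"
    and "axiom_M2' m"
    and "m x x = x"
  shows "subalgebra m (eigsp m x 0) \<and> subalgebra m (eigsp m x 1)"
proof -
  have alg: "comm_real_algebra m" and assoc: "\<forall>u v w. inner u (m v w) = inner (m u v) w"
    using assms(1) unfolding majorana_representation_def by auto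
  show ?thesis
    using subalgebra_eigsp_idempotent[OF alg assoc assms(3) assms(4)] by simp
qed

end
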